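(* Let $U$ be a scale aversion regular utility function and $\alpha$ the associated utility-based acceptability index. Then for all $X,Y\in L^\infty$: (1) if $X\le Y$ a.s. then $\alpha(X)\le\alpha(Y)$; (2) $X\ge0$ a.s. if and only if $\alpha(X)=\infty$; (3) for every $\lambda\in[0,1]$, $\alpha(\lambda X+(1-\lambda)Y)\ge\alpha(X)\wedge\alpha(Y)$; (4) if $X$ and $Y$ have the same law then $\alpha(X)=\alpha(Y)$; (5) if $\mathbb E[X]<0$ then $\alpha(X)=0$, and if $\mathbb E[X]>0$ then $\alpha(X)>0$; (6) (Fatou property) if $x\in[0,\infty]$, $X_n\in L^\infty$ with $\alpha(X_n)\ge x$ for all $n\in\mathbb N$ and $X_n\to X$ almost surely, then $\alpha(X)\ge x$; (7) if $\mathbb E[V(X)]\le\mathbb E[V(Y)]$ for every increasing concave $V\colon\mathbb R\to\mathbb R$, then $\alpha(X)\le\alpha(Y)$; (8) (inverse positive homogeneity) for every $\lambda>0$, $\alpha(\lambda X)=\lambda^{-1}\alpha(X)$ (with $\lambda^{-1}\cdot\infty=\infty$).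
   Context: Let $(\Omega,\mathcal F,\mathbb P)$ be a probability space, $L^0$ the set of all real-valued random variables and $L^\infty$ the set of essentially bounded ones. A utility function is a function $U\in C^2(\mathbb R)$ which is concave, strictly increasing and bounded from above. For $\gamma>0$ define $\mu_\gamma\colon L^0\to(-\infty,+\infty]$ by $\mu_\gamma(X):=-\tfrac1\gamma U^{-1}(\mathbb E[U(\gamma X)])$, with the convention $U^{-1}(-\infty):=-\infty$. $U$ is called scale aversion regular if $\mu_{\gamma_1}(X)\le\mu_{\gamma_2}(X)$ for all $X\in L^\infty$ and all $0<\gamma_1\le\gamma_2<\infty$. For scale aversion regular $U$, the utility-based acceptability index $\alpha\colon L^0\to[0,+\infty]$ is $\alpha(X):=\sup\{\gamma>0:\mu_\gamma(X)\le0\}$, with $\sup\emptyset:=0$. *)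

theory Defs
  imports "HOL-Probability.Probability"
begin

definition utility_function :: "(real \<Rightarrow> real) \<Rightarrow> bool" where
  "utility_function U \<longleftrightarrow>
     (\<exists>U' U''. (\<forall>x. (U has_real_derivative U' x) (at x)) \<and>
               (\<forall>x. (U' has_real_derivative U'' x) (at x)) \<and>
               continuous_on UNIV U'') \<and>
     concave_on UNIV U \<and> strict_mono U \<and> bdd_above (range U)"

definition Linf :: "'a measure \<Rightarrow> ('a \<Rightarrow> real) set" where
  "Linf M = {X. X \<in> borel_measurable M \<and> (\<exists>C. AE \<omega> in M. \<bar>X \<omega>\<bar> \<le> C)}"

text \<open>E[U(gamma X)] as an extended real. Since U is bounded above, for measurable X
  the expectation is either finite (integrable case) or equal to minus infinity.\<close>
definition exp_util :: "'a measure \<Rightarrow> (real \<Rightarrow> real) \<Rightarrow> real \<Rightarrow> ('a \<Rightarrow> real) \<Rightarrow> ereal" where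
  "exp_util M U \<gamma> X =
     (if integrable M (\<lambda>\<omega>. U (\<gamma> * X \<omega>)) then ereal (\<integral>\<omega>. U (\<gamma> * X \<omega>) \<partial>M) else -\<infinity>)"

definition Uinv :: "(real \<Rightarrow> real) \<Rightarrow> ereal \<Rightarrow> ereal" where
  "Uinv U t = (if t = -\<infinity> then -\<infinity> else ereal (the_inv U (real_of_ereal t)))"

definition mu :: "'a measure \<Rightarrow> (real \<Rightarrow> real) \<Rightarrow> real \<Rightarrow> ('a \<Rightarrow> real) \<Rightarrow> ereal" where
  "mu M U \<gamma> X = - (ereal (1 / \<gamma>) * Uinv U (exp_util M U \<gamma> X))"

definition scale_aversion_regular :: "'a measure \<Rightarrow> (real \<Rightarrow> real) \<Rightarrow> bool" where
  "scale_aversion_regular M U \<longleftrightarrow>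
     (\<forall>X \<in> Linf M. \<forall>\<gamma>1 \<gamma>2. 0 < \<gamma>1 \<and> \<gamma>1 \<le> \<gamma>2 \<longrightarrow> mu M U \<gamma>1 X \<le> mu M U \<gamma>2 X)"

definition acc_index :: "'a measure \<Rightarrow> (real \<Rightarrow> real) \<Rightarrow> ('a \<Rightarrow> real) \<Rightarrow> ereal" where
  "acc_index M U X =
     (let S = {ereal \<gamma> | \<gamma>. \<gamma> > 0 \<and> mu M U \<gamma> X \<le> 0} in if S = {} then 0 else Sup S)"

end

theory Submission
  imports Defs
begin

text \<open>
  Since \<open>E[U(\<gamma> X)]\<close> lies in the range of \<open>U\<close>, \<open>\<mu>\<^sub>\<gamma>(X) \<le> 0\<close> just says \<open>E[U(\<gamma> X)] \<ge> U(0)\<close>, so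
  \<open>\<alpha>(X)\<close> is the supremum of the scales \<open>\<gamma> > 0\<close> accepted in this sense; scale aversion regularity
  makes the accepted scales an initial segment of \<open>(0, \<infinity>)\<close>. Monotonicity, the concave order,
  law invariance and quasi-concavity are inherited from the corresponding properties of
  \<open>E[U(\<gamma> \<cdot>)]\<close>, and \<open>\<gamma> \<mapsto> \<gamma>/\<lambda>\<close> maps the accepted scales of \<open>X\<close> onto those of \<open>\<lambda> X\<close>. The sign
  of \<open>E[X]\<close> decides acceptance for small \<open>\<gamma>\<close> by the first-order expansion of \<open>U\<close> at \<open>0\<close>,
  whose tangent \<open>U(y) \<le> U(0) + U'(0) y\<close> also shows that \<open>U\<close> is unbounded below; as \<open>U\<close> is
  bounded above, a loss of positive probability is therefore rejected at large scales.
  The Fatou property is dominated convergence for \<open>U(\<gamma> X\<^sub>n)\<close> truncated at the a.s. lower bound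
  of \<open>U(\<gamma> X)\<close>.
\<close>

lemma utility_function_tangent_at_0:
  assumes "utility_function U"
  obtains D where "(U has_real_derivative D) (at 0)" "0 < D" "\<And>y. U y \<le> U 0 + D * y"
proof -
  obtain D where D: "(U has_real_derivative D) (at 0)"
    using assms unfolding utility_function_def by blast
  have tangent: "U y \<le> U 0 + D * y" for y
  proof -
    have "convex_on UNIV (\<lambda>x. - U x)"
      using assms unfolding utility_function_def concave_on_def by blast
    moreover have "((\<lambda>x. - U x) has_real_derivative - D) (at 0)"
      using D by (rule DERIV_minus)
    ultimately have "- D * (y - 0) \<le> - U y - - U 0"
      by (intro convex_on_imp_above_tangent[where A = UNIV]) auto
    then show ?thesis by simp
  qed
  have "U 0 < U 1"
    using assms unfolding utility_function_def strict_mono_def by simp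
  with tangent[of 1] have "0 < D" by simp
  with D tangent that show ?thesis by blast
qed

lemma utility_function_isCont: "utility_function U \<Longrightarrow> isCont U x"
  unfolding utility_function_def by (metis DERIV_isCont)

lemma utility_function_borel_measurable: "utility_function U \<Longrightarrow> U \<in> borel_measurable borel"
  by (intro borel_measurable_continuous_onI continuous_at_imp_continuous_on ballI
      utility_function_isCont)

lemma utility_function_mono: "utility_function U \<Longrightarrow> mono U"
  unfolding utility_function_def by (blast intro: strict_mono_mono)

lemma concave_on_UNIV_scaled:
  fixes f :: "real \<Rightarrow> real"
  assumes "concave_on UNIV f"
  shows "concave_on UNIV (\<lambda>x. f (c * x))"
  unfolding concave_on_def
proof (rule convex_onI)
  fix t x y :: real
  assume "0 < t" "t < 1"
  then have "(1 - t) * f (c * x) + t * f (c * y) \<le> f ((1 - t) * (c * x) + t * (c * y))"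
    using concave_onD[OF assms, of t "c * x" "c * y"] by simp
  then show "- f (c * ((1 - t) *\<^sub>R x + t *\<^sub>R y)) \<le> (1 - t) * - f (c * x) + t * - f (c * y)"
    by (simp add: algebra_simps)
qed simp

lemma has_real_derivative_first_order_lower_bound:
  assumes "(f has_real_derivative D) (at 0)" "0 < e"
  obtains d where "0 < d" "\<And>y. \<bar>y\<bar> < d \<Longrightarrow> f 0 + D * y - e * \<bar>y\<bar> \<le> f y"
proof -
  obtain d where "0 < d" and d: "\<And>y. \<bar>y\<bar> < d \<Longrightarrow> \<bar>f y - f 0 - D * y\<bar> \<le> e * \<bar>y\<bar>"
    using assms unfolding has_field_derivative_def has_derivative_at_alt by force
  have "f 0 + D * y - e * \<bar>y\<bar> \<le> f y" if "\<bar>y\<bar> < d" for y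
    using d[OF that] by linarith
  with \<open>0 < d\<close> that show ?thesis by blast
qed

lemma Linf_boundE:
  assumes "X \<in> Linf M"
  obtains C where "0 < C" "AE \<omega> in M. \<bar>X \<omega>\<bar> \<le> C"
proof -
  obtain C where "AE \<omega> in M. \<bar>X \<omega>\<bar> \<le> C"
    using assms unfolding Linf_def by auto
  then have "AE \<omega> in M. \<bar>X \<omega>\<bar> \<le> max C 1"
    by eventually_elim auto
  then show ?thesis using that[of "max C 1"] by auto
qed

lemma Linf_borel_measurable: "X \<in> Linf M \<Longrightarrow> X \<in> borel_measurable M"
  unfolding Linf_def by auto

lemma Linf_linear_combination:
  assumes "X \<in> Linf M" "Y \<in> Linf M"
  shows "(\<lambda>\<omega>. a * X \<omega> + b * Y \<omega>) \<in> Linf M"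
proof -
  obtain C1 C2 where "AE \<omega> in M. \<bar>X \<omega>\<bar> \<le> C1" "AE \<omega> in M. \<bar>Y \<omega>\<bar> \<le> C2"
    using Linf_boundE[OF assms(1)] Linf_boundE[OF assms(2)] by metis
  then have "AE \<omega> in M. \<bar>a * X \<omega> + b * Y \<omega>\<bar> \<le> \<bar>a\<bar> * C1 + \<bar>b\<bar> * C2"
  proof eventually_elim
    case (elim \<omega>)
    have "\<bar>a * X \<omega> + b * Y \<omega>\<bar> \<le> \<bar>a\<bar> * \<bar>X \<omega>\<bar> + \<bar>b\<bar> * \<bar>Y \<omega>\<bar>"
      by (metis abs_mult abs_triangle_ineq)
    also have "\<dots> \<le> \<bar>a\<bar> * C1 + \<bar>b\<bar> * C2"
      using elim by (intro add_mono mult_left_mono) auto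
    finally show ?case .
  qed
  moreover have "(\<lambda>\<omega>. a * X \<omega> + b * Y \<omega>) \<in> borel_measurable M"
    using Linf_borel_measurable[OF assms(1)] Linf_borel_measurable[OF assms(2)] by measurable
  ultimately show ?thesis unfolding Linf_def by blast
qed

lemma Linf_scaled: "X \<in> Linf M \<Longrightarrow> (\<lambda>\<omega>. c * X \<omega>) \<in> Linf M"
  using Linf_linear_combination[of X M X c 0] by simp

lemma not_AE_nonneg_imp_AE_fails_below:
  fixes X :: "'a \<Rightarrow> real"
  assumes "\<not> (AE \<omega> in M. 0 \<le> X \<omega>)"
  obtains e where "0 < e" "\<not> (AE \<omega> in M. - e \<le> X \<omega>)"
proof (rule ccontr)
  assume "\<not> thesis"
  then have "\<forall>n. AE \<omega> in M. - inverse (real (Suc n)) \<le> X \<omega>"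
    using that[of "inverse (real (Suc _))"] by auto
  then have "AE \<omega> in M. \<forall>n. - inverse (real (Suc n)) \<le> X \<omega>"
    by (simp add: AE_all_countable)
  then have "AE \<omega> in M. 0 \<le> X \<omega>"
  proof eventually_elim
    case (elim \<omega>)
    have "(\<lambda>n. - inverse (real (Suc n))) \<longlonglongrightarrow> - 0"
      by (intro tendsto_minus LIMSEQ_inverse_real_of_nat)
    with elim show ?case
      by (intro LIMSEQ_le_const2[where X = "\<lambda>n. - inverse (real (Suc n))"]) auto
  qed
  with assms show False by contradiction
qed

locale utility_prob_space = prob_space M for M :: "'a measure" +
  fixes U :: "real \<Rightarrow> real"
  assumes utility_function: "utility_function U"
begin

lemma integrable_Linf:
  assumes "X \<in> Linf M"
  shows "integrable M X"
proof -
  obtain C where "AE \<omega> in M. \<bar>X \<omega>\<bar> \<le> C"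
    using Linf_boundE[OF assms] by blast
  then show ?thesis
    by (intro integrable_const_bound[where B = C]) (auto intro: Linf_borel_measurable[OF assms])
qed

lemma utility_scaled_AE_bounds:
  assumes "X \<in> Linf M"
  obtains C where "0 \<le> C" "AE \<omega> in M. U (- C) \<le> U (\<gamma> * X \<omega>) \<and> U (\<gamma> * X \<omega>) \<le> U C"
proof -
  obtain C where "0 < C" and C: "AE \<omega> in M. \<bar>X \<omega>\<bar> \<le> C"
    using Linf_boundE[OF assms] .
  from C have AE: "AE \<omega> in M. U (- (\<bar>\<gamma>\<bar> * C)) \<le> U (\<gamma> * X \<omega>) \<and> U (\<gamma> * X \<omega>) \<le> U (\<bar>\<gamma>\<bar> * C)"
  proof eventually_elim
    case (elim \<omega>)
    then have "\<bar>\<gamma> * X \<omega>\<bar> \<le> \<bar>\<gamma>\<bar> * C"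
      by (simp add: abs_mult mult_left_mono)
    then show ?case
      using utility_function_mono[OF utility_function] by (auto simp: mono_def)
  qed
  show ?thesis
    using \<open>0 < C\<close> by (intro that[OF _ AE]) simp
qed

lemma integrable_utility:
  assumes "X \<in> Linf M"
  shows "integrable M (\<lambda>\<omega>. U (\<gamma> * X \<omega>))"
proof -
  obtain C where C: "AE \<omega> in M. U (- C) \<le> U (\<gamma> * X \<omega>) \<and> U (\<gamma> * X \<omega>) \<le> U C"
    using utility_scaled_AE_bounds[OF assms] by blast
  show ?thesis
  proof (rule integrable_const_bound[where B = "\<bar>U (- C)\<bar> + \<bar>U C\<bar>"])
    show "AE \<omega> in M. norm (U (\<gamma> * X \<omega>)) \<le> \<bar>U (- C)\<bar> + \<bar>U C\<bar>"
      using C by eventually_elim auto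
    show "(\<lambda>\<omega>. U (\<gamma> * X \<omega>)) \<in> borel_measurable M"
      using utility_function_borel_measurable[OF utility_function] Linf_borel_measurable[OF assms]
      by measurable
  qed
qed

lemma expected_utility_in_range:
  assumes "X \<in> Linf M"
  obtains t where "U t = (\<integral>\<omega>. U (\<gamma> * X \<omega>) \<partial>M)"
proof -
  obtain C where "0 \<le> C" and C: "AE \<omega> in M. U (- C) \<le> U (\<gamma> * X \<omega>) \<and> U (\<gamma> * X \<omega>) \<le> U C"
    using utility_scaled_AE_bounds[OF assms] by blast
  have "(\<integral>\<omega>. U (- C) \<partial>M) \<le> (\<integral>\<omega>. U (\<gamma> * X \<omega>) \<partial>M)"
    using C by (intro integral_mono_AE integrable_utility[OF assms]) auto
  moreover have "(\<integral>\<omega>. U (\<gamma> * X \<omega>) \<partial>M) \<le> (\<integral>\<omega>. U C \<partial>M)"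
    using C by (intro integral_mono_AE integrable_utility[OF assms]) auto
  ultimately have "U (- C) \<le> (\<integral>\<omega>. U (\<gamma> * X \<omega>) \<partial>M)" "(\<integral>\<omega>. U (\<gamma> * X \<omega>) \<partial>M) \<le> U C"
    by (simp_all add: prob_space)
  moreover have "continuous_on {- C..C} U"
    by (intro continuous_at_imp_continuous_on ballI utility_function_isCont[OF utility_function])
  ultimately show ?thesis
    using IVT'[of U "- C" _ C] \<open>0 \<le> C\<close> that by auto
qed

lemma mu_nonpos_iff:
  assumes "X \<in> Linf M" "0 < \<gamma>"
  shows "mu M U \<gamma> X \<le> 0 \<longleftrightarrow> U 0 \<le> (\<integral>\<omega>. U (\<gamma> * X \<omega>) \<partial>M)"
proof -
  have sm: "strict_mono U"
    using utility_function unfolding utility_function_def by blast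
  obtain t where t: "U t = (\<integral>\<omega>. U (\<gamma> * X \<omega>) \<partial>M)"
    using expected_utility_in_range[OF assms(1)] .
  have "the_inv U (U t) = t"
    using the_inv_f_f[OF strict_mono_imp_inj_on[OF sm]] by simp
  then have "mu M U \<gamma> X = ereal (- (t / \<gamma>))"
    unfolding mu_def exp_util_def Uinv_def using integrable_utility[OF assms(1)]
    by (simp flip: t)
  then have "mu M U \<gamma> X \<le> 0 \<longleftrightarrow> 0 \<le> t"
    using assms(2) by (simp add: field_simps)
  also have "\<dots> \<longleftrightarrow> U 0 \<le> U t"
    using sm by (simp add: strict_mono_less_eq)
  finally show ?thesis using t by simp
qed

definition acceptable_scales :: "('a \<Rightarrow> real) \<Rightarrow> real set" where
  "acceptable_scales X = {\<gamma>. 0 < \<gamma> \<and> U 0 \<le> (\<integral>\<omega>. U (\<gamma> * X \<omega>) \<partial>M)}"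

lemma acc_index_eq_SUP:
  assumes "X \<in> Linf M"
  shows "acc_index M U X = (SUP \<gamma> \<in> insert 0 (acceptable_scales X). ereal \<gamma>)"
proof -
  let ?S = "acceptable_scales X"
  have S: "{ereal \<gamma> | \<gamma>. \<gamma> > 0 \<and> mu M U \<gamma> X \<le> 0} = ereal ` ?S"
    using mu_nonpos_iff[OF assms] unfolding acceptable_scales_def by auto
  show ?thesis
  proof (cases "?S = {}")
    case False
    then obtain \<gamma> where "\<gamma> \<in> ?S" by blast
    then have "0 \<le> (SUP \<gamma> \<in> ?S. ereal \<gamma>)"
      by (intro SUP_upper2[of \<gamma>]) (auto simp: acceptable_scales_def)
    with False show ?thesis
      unfolding acc_index_def Let_def S by (simp add: zero_ereal_def[symmetric] max.absorb2)
  qed (simp add: acc_index_def S)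
qed

lemma acc_index_nonneg: "X \<in> Linf M \<Longrightarrow> 0 \<le> acc_index M U X"
  unfolding acc_index_eq_SUP zero_ereal_def by (rule SUP_upper) simp

lemma acc_index_upper: "X \<in> Linf M \<Longrightarrow> \<gamma> \<in> acceptable_scales X \<Longrightarrow> ereal \<gamma> \<le> acc_index M U X"
  unfolding acc_index_eq_SUP by (rule SUP_upper) simp

lemma acc_index_eq_0: "X \<in> Linf M \<Longrightarrow> acceptable_scales X = {} \<Longrightarrow> acc_index M U X = 0"
  by (simp add: acc_index_eq_SUP)

lemma acc_index_geI:
  assumes "X \<in> Linf M" and acceptable: "\<And>\<gamma>. 0 < \<gamma> \<Longrightarrow> ereal \<gamma> < a \<Longrightarrow> \<gamma> \<in> acceptable_scales X"
  shows "a \<le> acc_index M U X"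
proof (rule ccontr)
  assume "\<not> a \<le> acc_index M U X"
  then obtain z where z: "acc_index M U X < ereal z" "ereal z < a"
    using ereal_dense2 by (metis not_le)
  moreover have "0 < z"
    using acc_index_nonneg[OF assms(1)] z(1) by (metis ereal_less(2) order.strict_trans1)
  ultimately show False
    using acc_index_upper[OF assms(1) acceptable] by (meson not_le)
qed

lemma acc_index_mono_expected_utility:
  assumes "X \<in> Linf M" "Y \<in> Linf M"
    and "\<And>\<gamma>. 0 < \<gamma> \<Longrightarrow> (\<integral>\<omega>. U (\<gamma> * X \<omega>) \<partial>M) \<le> (\<integral>\<omega>. U (\<gamma> * Y \<omega>) \<partial>M)"
  shows "acc_index M U X \<le> acc_index M U Y"
proof -
  have "acceptable_scales X \<subseteq> acceptable_scales Y"
    using assms(3) unfolding acceptable_scales_def by force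
  then show ?thesis
    unfolding acc_index_eq_SUP[OF assms(1)] acc_index_eq_SUP[OF assms(2)]
    by (intro SUP_subset_mono) auto
qed

lemma acc_index_mono:
  assumes "X \<in> Linf M" "Y \<in> Linf M" "AE \<omega> in M. X \<omega> \<le> Y \<omega>"
  shows "acc_index M U X \<le> acc_index M U Y"
proof (rule acc_index_mono_expected_utility[OF assms(1,2)])
  fix \<gamma> :: real
  assume "0 < \<gamma>"
  with assms(3) have "AE \<omega> in M. U (\<gamma> * X \<omega>) \<le> U (\<gamma> * Y \<omega>)"
    using utility_function_mono[OF utility_function] by (auto simp: mono_def)
  then show "(\<integral>\<omega>. U (\<gamma> * X \<omega>) \<partial>M) \<le> (\<integral>\<omega>. U (\<gamma> * Y \<omega>) \<partial>M)"
    using assms(1,2) by (intro integral_mono_AE integrable_utility)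
qed

lemma acc_index_mono_concave_order:
  assumes "X \<in> Linf M" "Y \<in> Linf M"
    and "\<And>V. mono V \<Longrightarrow> concave_on UNIV V \<Longrightarrow> (\<integral>\<omega>. V (X \<omega>) \<partial>M) \<le> (\<integral>\<omega>. V (Y \<omega>) \<partial>M)"
  shows "acc_index M U X \<le> acc_index M U Y"
proof (rule acc_index_mono_expected_utility[OF assms(1,2)])
  fix \<gamma> :: real
  assume "0 < \<gamma>"
  then have "mono (\<lambda>t. U (\<gamma> * t))"
    using utility_function_mono[OF utility_function] by (auto simp: mono_def)
  moreover have "concave_on UNIV (\<lambda>t. U (\<gamma> * t))"
    using utility_function unfolding utility_function_def by (blast intro: concave_on_UNIV_scaled)
  ultimately show "(\<integral>\<omega>. U (\<gamma> * X \<omega>) \<partial>M) \<le> (\<integral>\<omega>. U (\<gamma> * Y \<omega>) \<partial>M)"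
    by (rule assms(3))
qed

lemma acc_index_distr_eq:
  assumes "X \<in> Linf M" "Y \<in> Linf M" "distr M borel X = distr M borel Y"
  shows "acc_index M U X = acc_index M U Y"
proof -
  have "(\<integral>\<omega>. U (\<gamma> * X \<omega>) \<partial>M) = (\<integral>\<omega>. U (\<gamma> * Y \<omega>) \<partial>M)" for \<gamma>
  proof -
    have U\<gamma>: "(\<lambda>x. U (\<gamma> * x)) \<in> borel_measurable borel"
      using utility_function_borel_measurable[OF utility_function] by measurable
    have "(\<integral>\<omega>. U (\<gamma> * X \<omega>) \<partial>M) = (\<integral>x. U (\<gamma> * x) \<partial>distr M borel X)"
      using integral_distr[OF Linf_borel_measurable[OF assms(1)] U\<gamma>] by simp
    also have "\<dots> = (\<integral>\<omega>. U (\<gamma> * Y \<omega>) \<partial>M)"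
      using integral_distr[OF Linf_borel_measurable[OF assms(2)] U\<gamma>] assms(3) by simp
    finally show ?thesis .
  qed
  then show ?thesis
    using assms(1,2) by (intro antisym acc_index_mono_expected_utility) auto
qed

lemma acc_index_scaled:
  assumes "X \<in> Linf M" "0 < c"
  shows "acc_index M U (\<lambda>\<omega>. c * X \<omega>) = ereal (1 / c) * acc_index M U X"
proof -
  have "acceptable_scales (\<lambda>\<omega>. c * X \<omega>) = (\<lambda>\<gamma>. \<gamma> / c) ` acceptable_scales X"
  proof (rule set_eqI)
    fix \<gamma> :: real
    have "\<gamma> \<in> acceptable_scales (\<lambda>\<omega>. c * X \<omega>) \<longleftrightarrow> c * \<gamma> \<in> acceptable_scales X"
      using assms(2) by (simp add: acceptable_scales_def mult.assoc mult.left_commute zero_less_mult_iff)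
    also have "\<dots> \<longleftrightarrow> \<gamma> \<in> (\<lambda>\<gamma>. \<gamma> / c) ` acceptable_scales X"
      using assms(2) by (auto simp: image_iff intro!: bexI[of _ "c * \<gamma>"])
    finally show "\<gamma> \<in> acceptable_scales (\<lambda>\<omega>. c * X \<omega>) \<longleftrightarrow> \<dots>" .
  qed
  then have "acc_index M U (\<lambda>\<omega>. c * X \<omega>) = (SUP \<gamma> \<in> insert 0 (acceptable_scales X). ereal (\<gamma> / c))"
    by (simp add: acc_index_eq_SUP[OF Linf_scaled[OF assms(1)]] image_image)
  also have "\<dots> = (SUP \<gamma> \<in> insert 0 (acceptable_scales X). ereal (1 / c) * ereal \<gamma>)"
    by simp
  also have "\<dots> = ereal (1 / c) * acc_index M U X"
    unfolding acc_index_eq_SUP[OF assms(1)] using assms(2)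
    by (intro Sup_ereal_mult_left'[symmetric]) auto
  finally show ?thesis .
qed

lemma acc_index_negative_expectation:
  assumes "X \<in> Linf M" "expectation X < 0"
  shows "acc_index M U X = 0"
proof (rule acc_index_eq_0[OF assms(1)])
  obtain D where "0 < D" and tangent: "\<And>y. U y \<le> U 0 + D * y"
    using utility_function_tangent_at_0[OF utility_function] by blast
  have "(\<integral>\<omega>. U (\<gamma> * X \<omega>) \<partial>M) < U 0" if "0 < \<gamma>" for \<gamma>
  proof -
    have "(\<integral>\<omega>. U (\<gamma> * X \<omega>) \<partial>M) \<le> (\<integral>\<omega>. U 0 + D * \<gamma> * X \<omega> \<partial>M)"
      using tangent integrable_Linf[OF assms(1)]
      by (intro integral_mono integrable_utility[OF assms(1)]) (auto simp: mult.assoc)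
    also have "\<dots> = U 0 + D * \<gamma> * expectation X"
      using integrable_Linf[OF assms(1)] by (simp add: prob_space)
    also have "\<dots> < U 0"
      using \<open>0 < D\<close> \<open>0 < \<gamma>\<close> assms(2) by (simp add: mult_pos_neg)
    finally show ?thesis .
  qed
  then show "acceptable_scales X = {}"
    unfolding acceptable_scales_def by (auto simp: not_le)
qed

lemma acc_index_positive_expectation:
  assumes "X \<in> Linf M" "0 < expectation X"
  shows "0 < acc_index M U X"
proof -
  obtain D where D: "(U has_real_derivative D) (at 0)" and "0 < D"
    using utility_function_tangent_at_0[OF utility_function] by blast
  obtain C where "0 < C" and C: "AE \<omega> in M. \<bar>X \<omega>\<bar> \<le> C"
    using Linf_boundE[OF assms(1)] .
  define e where "e = D * expectation X / (2 * C)"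
  have "0 < e"
    using \<open>0 < D\<close> \<open>0 < C\<close> assms(2) by (simp add: e_def)
  then obtain d where "0 < d" and first_order: "\<And>y. \<bar>y\<bar> < d \<Longrightarrow> U 0 + D * y - e * \<bar>y\<bar> \<le> U y"
    using has_real_derivative_first_order_lower_bound[OF D] by blast
  define \<gamma> where "\<gamma> = d / (2 * C)"
  have "0 < \<gamma>"
    using \<open>0 < d\<close> \<open>0 < C\<close> by (simp add: \<gamma>_def)
  \<comment> \<open>on the range of \<open>\<gamma> X\<close> the error of the first-order approximation is at most half of \<open>D \<gamma> E[X]\<close>\<close>
  have "AE \<omega> in M. U 0 + D * \<gamma> * X \<omega> - e * \<gamma> * C \<le> U (\<gamma> * X \<omega>)"
    using C
  proof eventually_elim
    case (elim \<omega>)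
    have "\<bar>\<gamma> * X \<omega>\<bar> \<le> \<gamma> * C"
      using elim \<open>0 < \<gamma>\<close> by (simp add: abs_mult)
    moreover have "\<gamma> * C < d"
      using \<open>0 < d\<close> \<open>0 < C\<close> by (simp add: \<gamma>_def)
    ultimately have "U 0 + D * (\<gamma> * X \<omega>) - e * \<bar>\<gamma> * X \<omega>\<bar> \<le> U (\<gamma> * X \<omega>)"
      by (intro first_order) simp
    moreover have "e * \<bar>\<gamma> * X \<omega>\<bar> \<le> e * (\<gamma> * C)"
      using \<open>0 < e\<close> \<open>\<bar>\<gamma> * X \<omega>\<bar> \<le> \<gamma> * C\<close> by (simp add: mult_left_mono)
    ultimately show ?case
      by (simp add: mult.assoc)
  qed
  then have "(\<integral>\<omega>. U 0 + D * \<gamma> * X \<omega> - e * \<gamma> * C \<partial>M) \<le> (\<integral>\<omega>. U (\<gamma> * X \<omega>) \<partial>M)"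
    using integrable_Linf[OF assms(1)] by (intro integral_mono_AE integrable_utility[OF assms(1)]) auto
  moreover have "(\<integral>\<omega>. U 0 + D * \<gamma> * X \<omega> - e * \<gamma> * C \<partial>M) = U 0 + \<gamma> * (D * expectation X / 2)"
    using integrable_Linf[OF assms(1)] \<open>0 < C\<close> by (simp add: prob_space e_def field_simps)
  moreover have "0 < \<gamma> * (D * expectation X / 2)"
    using \<open>0 < \<gamma>\<close> \<open>0 < D\<close> assms(2) by simp
  ultimately have "\<gamma> \<in> acceptable_scales X"
    using \<open>0 < \<gamma>\<close> unfolding acceptable_scales_def by simp
  then show ?thesis
    using acc_index_upper[OF assms(1)] \<open>0 < \<gamma>\<close> by (metis ereal_less(2) order.strict_trans2)
qed

lemma acc_index_AE_nonneg:
  assumes "X \<in> Linf M" "AE \<omega> in M. 0 \<le> X \<omega>"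
  shows "acc_index M U X = \<infinity>"
proof -
  have "\<infinity> \<le> acc_index M U X"
  proof (rule acc_index_geI[OF assms(1)])
    fix \<gamma> :: real
    assume "0 < \<gamma>"
    with assms(2) have "AE \<omega> in M. U 0 \<le> U (\<gamma> * X \<omega>)"
      using utility_function_mono[OF utility_function] by (auto simp: mono_def)
    then have "(\<integral>\<omega>. U 0 \<partial>M) \<le> (\<integral>\<omega>. U (\<gamma> * X \<omega>) \<partial>M)"
      using assms(1) by (intro integral_mono_AE integrable_utility) auto
    with \<open>0 < \<gamma>\<close> show "\<gamma> \<in> acceptable_scales X"
      by (simp add: acceptable_scales_def prob_space)
  qed
  then show ?thesis by simp
qed

lemma acceptable_scales_AE_limit:
  assumes "X \<in> Linf M" "\<And>n. Xs n \<in> Linf M" "\<And>n. \<gamma> \<in> acceptable_scales (Xs n)"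
    and "AE \<omega> in M. (\<lambda>n. Xs n \<omega>) \<longlonglongrightarrow> X \<omega>"
  shows "\<gamma> \<in> acceptable_scales X"
proof -
  have "0 < \<gamma>" and accepted: "\<And>n. U 0 \<le> (\<integral>\<omega>. U (\<gamma> * Xs n \<omega>) \<partial>M)"
    using assms(3) unfolding acceptable_scales_def by auto
  obtain C where C: "AE \<omega> in M. U (- C) \<le> U (\<gamma> * X \<omega>) \<and> U (\<gamma> * X \<omega>) \<le> U C"
    using utility_scaled_AE_bounds[OF assms(1)] by blast
  obtain B where B: "\<And>t. U t \<le> B"
    using utility_function unfolding utility_function_def bdd_above_def by auto
  define s where "s n \<omega> = max (U (\<gamma> * Xs n \<omega>)) (U (- C))" for n \<omega>
  define f where "f \<omega> = max (U (\<gamma> * X \<omega>)) (U (- C))" for \<omega>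
  have U: "U \<in> borel_measurable borel"
    by (rule utility_function_borel_measurable[OF utility_function])
  have f: "f \<in> borel_measurable M"
    unfolding f_def using U Linf_borel_measurable[OF assms(1)] by measurable
  have s: "s n \<in> borel_measurable M" for n
    unfolding s_def using U Linf_borel_measurable[OF assms(2)] by measurable
  have bound: "AE \<omega> in M. norm (s n \<omega>) \<le> \<bar>U (- C)\<bar> + \<bar>B\<bar>" for n
  proof (intro AE_I2)
    fix \<omega>
    show "norm (s n \<omega>) \<le> \<bar>U (- C)\<bar> + \<bar>B\<bar>"
      using B[of "\<gamma> * Xs n \<omega>"] by (auto simp: s_def abs_le_iff max_def)
  qed
  have "AE \<omega> in M. (\<lambda>n. s n \<omega>) \<longlonglongrightarrow> f \<omega>"
    using assms(4)
  proof eventually_elim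
    case (elim \<omega>)
    then have "(\<lambda>n. U (\<gamma> * Xs n \<omega>)) \<longlonglongrightarrow> U (\<gamma> * X \<omega>)"
      by (intro isCont_tendsto_compose[OF utility_function_isCont[OF utility_function]] tendsto_intros)
    then show ?case
      unfolding s_def f_def by (intro tendsto_intros)
  qed
  note dominated = integral_dominated_convergence[OF f s _ this bound]
    integrable_dominated_convergence2[OF f s _ this bound]
  have "U 0 \<le> (\<integral>\<omega>. s n \<omega> \<partial>M)" for n
  proof -
    have "(\<integral>\<omega>. U (\<gamma> * Xs n \<omega>) \<partial>M) \<le> (\<integral>\<omega>. s n \<omega> \<partial>M)"
      using dominated(2) by (intro integral_mono integrable_utility[OF assms(2)]) (auto simp: s_def)
    then show ?thesis
      using accepted[of n] by simp
  qed
  then have "U 0 \<le> (\<integral>\<omega>. f \<omega> \<partial>M)"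
    using dominated(1) by (intro LIMSEQ_le_const) auto
  also have "(\<integral>\<omega>. f \<omega> \<partial>M) = (\<integral>\<omega>. U (\<gamma> * X \<omega>) \<partial>M)"
    using C by (intro integral_cong_AE f) (auto simp: f_def intro: borel_measurable_integrable integrable_utility[OF assms(1)])
  finally show ?thesis
    using \<open>0 < \<gamma>\<close> unfolding acceptable_scales_def by simp
qed

end

locale scale_aversion_regular_space = utility_prob_space +
  assumes scale_aversion_regular: "scale_aversion_regular M U"
begin

lemma acceptable_scales_downward_closed:
  assumes "X \<in> Linf M" "0 < \<gamma>" "\<gamma> \<le> \<gamma>'" "\<gamma>' \<in> acceptable_scales X"
  shows "\<gamma> \<in> acceptable_scales X"
proof -
  have "mu M U \<gamma> X \<le> mu M U \<gamma>' X"
    using scale_aversion_regular assms(1-3) unfolding scale_aversion_regular_def by blast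
  also have "mu M U \<gamma>' X \<le> 0"
    using assms(4) mu_nonpos_iff[OF assms(1)] unfolding acceptable_scales_def by blast
  finally show ?thesis
    using mu_nonpos_iff[OF assms(1,2)] assms(2) unfolding acceptable_scales_def by blast
qed

lemma less_acc_index_imp_acceptable:
  assumes "X \<in> Linf M" "0 < \<gamma>" "ereal \<gamma> < acc_index M U X"
  shows "\<gamma> \<in> acceptable_scales X"
proof -
  obtain \<gamma>' where "\<gamma>' \<in> insert 0 (acceptable_scales X)" "\<gamma> < \<gamma>'"
    using assms(3) unfolding acc_index_eq_SUP[OF assms(1)] less_SUP_iff by auto
  with assms(2) have "\<gamma>' \<in> acceptable_scales X" "\<gamma> \<le> \<gamma>'"
    by auto
  then show ?thesis
    using acceptable_scales_downward_closed[OF assms(1,2)] by blast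
qed

lemma acc_index_quasiconcave:
  assumes "X \<in> Linf M" "Y \<in> Linf M" "0 \<le> c" "c \<le> 1"
  shows "min (acc_index M U X) (acc_index M U Y) \<le> acc_index M U (\<lambda>\<omega>. c * X \<omega> + (1 - c) * Y \<omega>)"
proof (rule acc_index_geI[OF Linf_linear_combination[OF assms(1,2)]])
  fix \<gamma> :: real
  assume "0 < \<gamma>" "ereal \<gamma> < min (acc_index M U X) (acc_index M U Y)"
  then have "\<gamma> \<in> acceptable_scales X" "\<gamma> \<in> acceptable_scales Y"
    using less_acc_index_imp_acceptable assms(1,2) by auto
  have "U 0 = c * U 0 + (1 - c) * U 0"
    by (simp add: algebra_simps)
  also have "\<dots> \<le> c * (\<integral>\<omega>. U (\<gamma> * X \<omega>) \<partial>M) + (1 - c) * (\<integral>\<omega>. U (\<gamma> * Y \<omega>) \<partial>M)"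
    using \<open>\<gamma> \<in> acceptable_scales X\<close> \<open>\<gamma> \<in> acceptable_scales Y\<close> assms(3,4)
    unfolding acceptable_scales_def by (intro add_mono mult_left_mono) auto
  also have "\<dots> = (\<integral>\<omega>. c * U (\<gamma> * X \<omega>) + (1 - c) * U (\<gamma> * Y \<omega>) \<partial>M)"
    using integrable_utility assms(1,2) by simp
  also have "\<dots> \<le> (\<integral>\<omega>. U (\<gamma> * (c * X \<omega> + (1 - c) * Y \<omega>)) \<partial>M)"
  proof (intro integral_mono integrable_utility Linf_linear_combination assms(1,2))
    fix \<omega>
    have "(1 - c) * U (\<gamma> * Y \<omega>) + c * U (\<gamma> * X \<omega>) \<le> U ((1 - c) * (\<gamma> * Y \<omega>) + c * (\<gamma> * X \<omega>))"
      using utility_function assms(3,4) concave_onD[of UNIV U c "\<gamma> * Y \<omega>" "\<gamma> * X \<omega>"]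
      unfolding utility_function_def by simp
    then show "c * U (\<gamma> * X \<omega>) + (1 - c) * U (\<gamma> * Y \<omega>) \<le> U (\<gamma> * (c * X \<omega> + (1 - c) * Y \<omega>))"
      by (simp add: algebra_simps)
  qed (use integrable_utility assms(1,2) in simp)
  finally show "\<gamma> \<in> acceptable_scales (\<lambda>\<omega>. c * X \<omega> + (1 - c) * Y \<omega>)"
    using \<open>0 < \<gamma>\<close> unfolding acceptable_scales_def by simp
qed

lemma acc_index_Fatou:
  assumes "X \<in> Linf M" "\<And>n. Xs n \<in> Linf M" "\<And>n. x \<le> acc_index M U (Xs n)"
    and "AE \<omega> in M. (\<lambda>n. Xs n \<omega>) \<longlonglongrightarrow> X \<omega>"
  shows "x \<le> acc_index M U X"
proof (rule acc_index_geI[OF assms(1)])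
  fix \<gamma> :: real
  assume "0 < \<gamma>" "ereal \<gamma> < x"
  then have "\<gamma> \<in> acceptable_scales (Xs n)" for n
    using less_acc_index_imp_acceptable[OF assms(2)] assms(3) by (meson order.strict_trans2)
  then show "\<gamma> \<in> acceptable_scales X"
    using acceptable_scales_AE_limit assms(1,2,4) by blast
qed

lemma acc_index_infinite_imp_AE_nonneg:
  assumes "X \<in> Linf M" "acc_index M U X = \<infinity>"
  shows "AE \<omega> in M. 0 \<le> X \<omega>"
proof (rule ccontr)
  assume "\<not> (AE \<omega> in M. 0 \<le> X \<omega>)"
  then obtain e where "0 < e" and e: "\<not> (AE \<omega> in M. - e \<le> X \<omega>)"
    by (rule not_AE_nonneg_imp_AE_fails_below)
  define A where "A = {\<omega> \<in> space M. X \<omega> < - e}"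
  have A: "A \<in> events"
    unfolding A_def using Linf_borel_measurable[OF assms(1)] by measurable
  then have [simp]: "integrable M (indicator A :: 'a \<Rightarrow> real)"
    by (intro integrable_real_indicator) (simp_all add: emeasure_eq_measure)
  have "{\<omega> \<in> space M. \<not> - e \<le> X \<omega>} = A"
    by (auto simp: A_def)
  then have "prob A \<noteq> 0"
    using e AE_iff_measurable[OF A] by (simp add: emeasure_eq_measure)
  then have "0 < prob A"
    by (simp add: zero_less_measure_iff)
  obtain D where "0 < D" and tangent: "\<And>y. U y \<le> U 0 + D * y"
    using utility_function_tangent_at_0[OF utility_function] by blast
  obtain B where B: "\<And>t. U t \<le> B"
    using utility_function unfolding utility_function_def bdd_above_def by auto
  \<comment> \<open>a scale so large that the loss on \<open>A\<close> outweighs any gain, as \<open>U\<close> is bounded above\<close>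
  define \<gamma> where "\<gamma> = (B - U 0) / (D * e * prob A) + 1"
  have "0 < \<gamma>"
    using B[of 0] \<open>0 < D\<close> \<open>0 < e\<close> \<open>0 < prob A\<close> unfolding \<gamma>_def
    by (simp add: add_nonneg_pos)
  have bound: "U (\<gamma> * X \<omega>) \<le> B - (B - U 0 + D * \<gamma> * e) * indicator A \<omega>" for \<omega>
  proof (cases "\<omega> \<in> A")
    case True
    then have "\<gamma> * X \<omega> \<le> \<gamma> * - e"
      using \<open>0 < \<gamma>\<close> by (intro mult_left_mono) (auto simp: A_def)
    then show ?thesis
      using True tangent[of "\<gamma> * X \<omega>"] \<open>0 < D\<close> mult_left_mono[of "\<gamma> * X \<omega>" "\<gamma> * - e" D]
      by (simp add: algebra_simps)
  qed (simp add: B)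
  have "\<gamma> \<in> acceptable_scales X"
    using less_acc_index_imp_acceptable[OF assms(1) \<open>0 < \<gamma>\<close>] assms(2) by simp
  then have "U 0 \<le> (\<integral>\<omega>. U (\<gamma> * X \<omega>) \<partial>M)"
    by (simp add: acceptable_scales_def)
  also have "\<dots> \<le> (\<integral>\<omega>. B - (B - U 0 + D * \<gamma> * e) * indicator A \<omega> \<partial>M)"
    using bound A by (intro integral_mono integrable_utility[OF assms(1)]) auto
  also have "\<dots> = B - (B - U 0 + D * \<gamma> * e) * prob A"
    using A by (simp add: prob_space)
  also have "\<dots> < U 0"
  proof -
    have "(B - U 0 + D * \<gamma> * e) * prob A = B - U 0 + B * prob A - U 0 * prob A + D * e * prob A"
      using \<open>0 < D\<close> \<open>0 < e\<close> \<open>0 < prob A\<close> by (simp add: \<gamma>_def field_simps)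
    moreover have "U 0 * prob A \<le> B * prob A" "0 < D * e * prob A"
      using B[of 0] \<open>0 < D\<close> \<open>0 < e\<close> \<open>0 < prob A\<close> by simp_all
    ultimately show ?thesis
      by linarith
  qed
  finally show False by simp
qed

end

theorem proposition3p2:
  fixes M :: "'a measure" and U :: "real \<Rightarrow> real" and X Y :: "'a \<Rightarrow> real"
  assumes "prob_space M"
    and "utility_function U"
    and "scale_aversion_regular M U"
    and "X \<in> Linf M" and "Y \<in> Linf M"
  shows
    "((AE \<omega> in M. X \<omega> \<le> Y \<omega>) \<longrightarrow> acc_index M U X \<le> acc_index M U Y)
   \<and> ((AE \<omega> in M. X \<omega> \<ge> 0) \<longleftrightarrow> acc_index M U X = \<infinity>)
   \<and> (\<forall>c::real. 0 \<le> c \<and> c \<le> 1 \<longrightarrow>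
        acc_index M U (\<lambda>\<omega>. c * X \<omega> + (1 - c) * Y \<omega>) \<ge> min (acc_index M U X) (acc_index M U Y))
   \<and> (distr M borel X = distr M borel Y \<longrightarrow> acc_index M U X = acc_index M U Y)
   \<and> ((\<integral>\<omega>. X \<omega> \<partial>M) < 0 \<longrightarrow> acc_index M U X = 0)
   \<and> ((\<integral>\<omega>. X \<omega> \<partial>M) > 0 \<longrightarrow> acc_index M U X > 0)
   \<and> (\<forall>(x::ereal) (Xs::nat \<Rightarrow> 'a \<Rightarrow> real). x \<ge> 0 \<and> (\<forall>n. Xs n \<in> Linf M)
        \<and> (\<forall>n. acc_index M U (Xs n) \<ge> x)
        \<and> (AE \<omega> in M. (\<lambda>n. Xs n \<omega>) \<longlonglongrightarrow> X \<omega>)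
        \<longrightarrow> acc_index M U X \<ge> x)
   \<and> ((\<forall>V::real \<Rightarrow> real. mono V \<and> concave_on UNIV V \<longrightarrow>
          (\<integral>\<omega>. V (X \<omega>) \<partial>M) \<le> (\<integral>\<omega>. V (Y \<omega>) \<partial>M))
        \<longrightarrow> acc_index M U X \<le> acc_index M U Y)
   \<and> (\<forall>c::real. c > 0 \<longrightarrow>
        acc_index M U (\<lambda>\<omega>. c * X \<omega>) = ereal (1 / c) * acc_index M U X)"
proof -
  interpret scale_aversion_regular_space M U
    using assms(1-3)
    by (simp add: scale_aversion_regular_space_def scale_aversion_regular_space_axioms_def
        utility_prob_space_def utility_prob_space_axioms_def)
  show ?thesis
  proof (intro conjI allI impI)
    show "(AE \<omega> in M. X \<omega> \<ge> 0) \<longleftrightarrow> acc_index M U X = \<infinity>"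
      using acc_index_AE_nonneg acc_index_infinite_imp_AE_nonneg assms(4) by blast
  qed (use assms(4,5) in \<open>auto intro: acc_index_mono acc_index_quasiconcave acc_index_distr_eq
      acc_index_negative_expectation acc_index_positive_expectation acc_index_Fatou
      acc_index_mono_concave_order acc_index_scaled\<close>)
qed

end
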